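(* Any quantum algorithm that solves \textsc{AmpFil}$(\mathcal{D},\epsilon,\tau)$ requires $\Omega\big(\frac1\epsilon+\frac1\tau\big)$ queries.
   Context: \textsc{AmpFil}$(\mathcal{D},\epsilon,\tau)$ (amplitude filtering): one is given oracle access to a quantum circuit $O_D$ with output state $\sum_x\alpha_x|x\rangle|\xi_x\rangle$ (measured in the standard basis it induces a distribution $\mathcal{D}$ with $p_x=|\alpha_x|^2$); given a threshold $\tau$ and accuracy $\epsilon$, the task is to decide (with bounded error) whether some $x$ has $|\alpha_x|\ge\tau$ or every $x$ has $|\alpha_x|<\tau-\epsilon$, under the promise that one of the two holds. The query complexity is the number of calls to $O_D$. *)

theory Defs
  imports "Jordan_Normal_Form.Matrix"
begin

definition cadj :: "complex mat \<Rightarrow> complex mat" where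
  "cadj A = mat (dim_col A) (dim_row A) (\<lambda>(i,j). cnj (A $$ (j,i)))"

definition is_unitary :: "nat \<Rightarrow> complex mat \<Rightarrow> bool" where
  "is_unitary d U \<longleftrightarrow> U \<in> carrier_mat d d \<and> cadj U * U = 1\<^sub>m d \<and> U * cadj U = 1\<^sub>m d"

(* The oracle O_D is a unitary on C^n (x) C^m (basis index x*m + j, x < n, j < m):
   register |x> of dimension n, garbage register of dimension m.
   Its output state is O_D |0> = sum_x alpha_x |x>|xi_x>. *)

definition oracle_state :: "nat \<Rightarrow> nat \<Rightarrow> complex mat \<Rightarrow> complex vec" where
  "oracle_state n m U = U *\<^sub>v unit_vec (n * m) 0"

(* |alpha_x| = norm of the x-block of the output state (p_x = |alpha_x|^2) *)
definition amp_abs :: "nat \<Rightarrow> nat \<Rightarrow> complex mat \<Rightarrow> nat \<Rightarrow> real" where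
  "amp_abs n m U x = sqrt (\<Sum>j<m. (cmod (oracle_state n m U $ (x * m + j)))\<^sup>2)"

definition ampfil_yes :: "nat \<Rightarrow> nat \<Rightarrow> real \<Rightarrow> complex mat \<Rightarrow> bool" where
  "ampfil_yes n m \<tau> U \<longleftrightarrow> (\<exists>x<n. amp_abs n m U x \<ge> \<tau>)"

definition ampfil_no :: "nat \<Rightarrow> nat \<Rightarrow> real \<Rightarrow> real \<Rightarrow> complex mat \<Rightarrow> bool" where
  "ampfil_no n m \<epsilon> \<tau> U \<longleftrightarrow> (\<forall>x<n. amp_abs n m U x < \<tau> - \<epsilon>)"

(* A query algorithm with oracle dimension D works on C^D (x) C^w
   (basis index i*w + k, i < D, k < w).  A (generalised controlled) query
   applies the oracle O (= U or U^dagger) to the first register when the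
   workspace basis state k lies in the control set C, identity otherwise.
   C = {0..<w} gives a plain query, C a half gives a controlled query. *)
definition query_op :: "nat \<Rightarrow> nat \<Rightarrow> nat set \<Rightarrow> complex mat \<Rightarrow> complex mat" where
  "query_op D w C Orc = mat (D * w) (D * w) (\<lambda>(r,s).
      if r mod w = s mod w then
        (if r mod w \<in> C then Orc $$ (r div w, s div w)
         else (if r div w = s div w then 1 else 0))
      else 0)"

record qalg =
  work_dim :: nat
  num_queries :: nat
  gates :: "nat \<Rightarrow> complex mat"
  ctrl :: "nat \<Rightarrow> nat set"
  dagger :: "nat \<Rightarrow> bool"
  accept :: "nat set"

definition wf_qalg :: "nat \<Rightarrow> qalg \<Rightarrow> bool" where
  "wf_qalg D A \<longleftrightarrow> work_dim A \<ge> 1 \<and>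
     (\<forall>t\<le>num_queries A. is_unitary (D * work_dim A) (gates A t)) \<and>
     (\<forall>t<num_queries A. ctrl A t \<subseteq> {..<work_dim A})"

fun run_state :: "nat \<Rightarrow> qalg \<Rightarrow> complex mat \<Rightarrow> nat \<Rightarrow> complex vec" where
  "run_state D A U 0 = gates A 0 *\<^sub>v unit_vec (D * work_dim A) 0"
| "run_state D A U (Suc t) =
     gates A (Suc t) *\<^sub>v (query_op D (work_dim A) (ctrl A t)
        (if dagger A t then cadj U else U) *\<^sub>v run_state D A U t)"

definition accept_prob :: "nat \<Rightarrow> qalg \<Rightarrow> complex mat \<Rightarrow> real" where
  "accept_prob D A U =
     (\<Sum>j\<in>accept A \<inter> {..<D * work_dim A}. (cmod (run_state D A U (num_queries A) $ j))\<^sup>2)"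

definition solves_ampfil :: "nat \<Rightarrow> nat \<Rightarrow> real \<Rightarrow> real \<Rightarrow> qalg \<Rightarrow> bool" where
  "solves_ampfil n m \<epsilon> \<tau> A \<longleftrightarrow> wf_qalg (n * m) A \<and>
     (\<forall>U. is_unitary (n * m) U \<longrightarrow>
        (ampfil_yes n m \<tau> U \<longrightarrow> accept_prob (n * m) A U \<ge> 2/3) \<and>
        (ampfil_no n m \<epsilon> \<tau> U \<longrightarrow> accept_prob (n * m) A U \<le> 1/3))"

end

theory Submission
  imports Defs "HOL-Analysis.L2_Norm"
begin

text \<open>
  The hard oracles are reflections \<open>O\<^sub>p = I - p p\<^sup>T\<close> with \<open>|p|\<^sup>2 = 2\<close> and \<open>p\<^sub>0 = 1\<close>, whose
  output state \<open>O\<^sub>p |0\<rangle> = |0\<rangle> - p\<close> has its amplitudes read off from \<open>p\<close>. Put amplitude \<open>a\<close>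
  on \<open>x = 1\<close> and spread the remaining weight \<open>1 - a\<^sup>2\<close> evenly over \<open>K > 1/(\<tau> - \<epsilon>)\<^sup>2\<close>
  further values of \<open>x\<close>, so that those amplitudes stay below \<open>\<tau> - \<epsilon>\<close>. For \<open>a = \<tau>\<close> this is a
  yes-instance, for \<open>a = b\<close> slightly below \<open>\<tau> - \<epsilon>\<close> a no-instance, and the two reflections are
  \<open>O(\<tau> - b) = O(\<epsilon>)\<close> apart in operator norm. By the hybrid argument \<open>T\<close> queries move the
  acceptance probability by at most \<open>O(T \<epsilon>)\<close>, so bounded error forces \<open>T = \<Omega>(1/\<epsilon>)\<close>;
  finally \<open>1/\<epsilon> \<ge> 1/\<tau>\<close>.
\<close>

lemma sum_lessThan_mult_split:
  fixes f :: "nat \<Rightarrow> 'a::comm_monoid_add"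
  shows "(\<Sum>r<n * m. f r) = (\<Sum>x<n. \<Sum>j<m. f (x * m + j))"
proof -
  have "(\<Sum>r<n * m. f r) = (\<Sum>x<n. sum f {x * m..<x * m + m})"
    by (simp add: sum.nat_group)
  also have "\<dots> = (\<Sum>x<n. \<Sum>j<m. f (x * m + j))"
  proof (rule sum.cong[OF refl])
    fix x
    show "sum f {x * m..<x * m + m} = (\<Sum>j<m. f (x * m + j))"
      using sum.shift_bounds_nat_ivl[of f 0 "x * m" m]
      by (simp add: atLeast0LessThan add.commute)
  qed
  finally show ?thesis .
qed

lemma sum_lessThan_eq_single:
  fixes f :: "nat \<Rightarrow> 'a::comm_monoid_add"
  assumes "i < d" "\<And>j. j < d \<Longrightarrow> j \<noteq> i \<Longrightarrow> f j = 0"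
  shows "(\<Sum>j<d. f j) = f i"
  using sum.mono_neutral_right[of "{..<d}" "{i}" f] assms by auto

lemma mult_add_less_mult:
  fixes x j n m :: nat
  assumes "x < n" "j < m"
  shows "x * m + j < n * m"
proof -
  have "x * m + j < Suc x * m" using assms(2) by simp
  also have "\<dots> \<le> n * m" using assms(1) by (intro mult_right_mono) auto
  finally show ?thesis .
qed

lemma mult_vec_index_sum:
  assumes "G \<in> carrier_mat d d" "dim_vec v = d" "i < d"
  shows "(G *\<^sub>v v) $ i = (\<Sum>j<d. G $$ (i, j) * v $ j)"
  using assms by (simp add: scalar_prod_def atLeast0LessThan)

definition vec_norm :: "complex vec \<Rightarrow> real" where
  "vec_norm v = L2_set (\<lambda>i. cmod (v $ i)) {..<dim_vec v}"

lemma vec_norm_nonneg [simp]: "0 \<le> vec_norm v"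
  by (simp add: vec_norm_def)

lemma vec_norm_sq: "(vec_norm v)\<^sup>2 = (\<Sum>i<dim_vec v. (cmod (v $ i))\<^sup>2)"
  by (simp add: vec_norm_def L2_set_def sum_nonneg)

lemma vec_norm_sq_complex: "complex_of_real ((vec_norm v)\<^sup>2) = (\<Sum>i<dim_vec v. cnj (v $ i) * v $ i)"
  unfolding vec_norm_sq of_real_sum by (simp only: complex_norm_square mult.commute)

lemma vec_norm_minus:
  "dim_vec a = dim_vec b \<Longrightarrow> vec_norm (a - b) = L2_set (\<lambda>i. cmod (a $ i - b $ i)) {..<dim_vec b}"
  unfolding vec_norm_def by (intro L2_set_cong) auto

lemma vec_norm_eqI:
  assumes "(vec_norm v)\<^sup>2 = (vec_norm w)\<^sup>2"
  shows "vec_norm v = vec_norm w"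
  using assms by (simp add: power2_eq_iff_nonneg)

lemma vec_norm_unit_vec_le: "vec_norm (unit_vec n 0) \<le> 1"
proof (cases "n = 0")
  case False
  have "(vec_norm (unit_vec n 0))\<^sup>2 = (\<Sum>i<n. if i = 0 then 1 else 0)"
    unfolding vec_norm_sq by (intro sum.cong) auto
  also have "\<dots> = 1" using False by simp
  finally show ?thesis
    using abs_square_le_1[of "vec_norm (unit_vec n 0)"] by simp
qed (simp add: vec_norm_def)

lemma vec_norm_diff_triangle:
  assumes "dim_vec a = d" "dim_vec b = d" "dim_vec c = d"
  shows "vec_norm (a - c) \<le> vec_norm (a - b) + vec_norm (b - c)"
proof -
  have "vec_norm (a - c) \<le> L2_set (\<lambda>i. cmod (a $ i - b $ i) + cmod (b $ i - c $ i)) {..<d}"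
    using assms by (simp add: vec_norm_minus)
      (rule L2_set_mono, rule norm_diff_triangle_le[OF order_refl order_refl], simp)
  also have "\<dots> \<le> vec_norm (a - b) + vec_norm (b - c)"
    using assms by (simp add: vec_norm_minus L2_set_triangle_ineq)
  finally show ?thesis .
qed

lemma unitary_carrier: "is_unitary d G \<Longrightarrow> G \<in> carrier_mat d d"
  by (simp add: is_unitary_def)

lemma cadj_carrier: "G \<in> carrier_mat d d \<Longrightarrow> cadj G \<in> carrier_mat d d"
  by (simp add: cadj_def)

lemma cadj_cadj: "cadj (cadj G) = G"
  by (rule eq_matI) (auto simp: cadj_def)

lemma unitary_cadj: "is_unitary d G \<Longrightarrow> is_unitary d (cadj G)"
  by (auto simp: is_unitary_def cadj_cadj cadj_carrier)

lemma cadj_mult_vec_adjoint: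
  assumes G: "G \<in> carrier_mat d d" and v: "dim_vec v = d" and w: "dim_vec w = d"
  shows "(\<Sum>i<d. cnj ((G *\<^sub>v v) $ i) * w $ i) = (\<Sum>j<d. cnj (v $ j) * (cadj G *\<^sub>v w) $ j)"
proof -
  have "(\<Sum>i<d. cnj ((G *\<^sub>v v) $ i) * w $ i) = (\<Sum>i<d. \<Sum>j<d. cnj (v $ j) * (cnj (G $$ (i, j)) * w $ i))"
    using G v by (intro sum.cong refl)
      (subst mult_vec_index_sum[OF G v], simp_all add: sum_distrib_right sum_distrib_left mult_ac)
  also have "\<dots> = (\<Sum>j<d. cnj (v $ j) * (\<Sum>i<d. cadj G $$ (j, i) * w $ i))"
    using G by (subst sum.swap) (simp add: sum_distrib_left cadj_def)
  also have "\<dots> = (\<Sum>j<d. cnj (v $ j) * (cadj G *\<^sub>v w) $ j)"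
    using G w by (intro sum.cong refl) (subst mult_vec_index_sum[OF cadj_carrier[OF G] w], simp_all)
  finally show ?thesis .
qed

lemma unitary_vec_norm:
  assumes U: "is_unitary d G" and v: "dim_vec v = d"
  shows "vec_norm (G *\<^sub>v v) = vec_norm v"
proof (rule vec_norm_eqI)
  have G: "G \<in> carrier_mat d d" and GG: "cadj G * G = 1\<^sub>m d"
    using U by (auto simp: is_unitary_def)
  have Gv: "dim_vec (G *\<^sub>v v) = d"
    using G by simp
  have vc: "v \<in> carrier_vec d"
    using v by (rule carrier_vecI)
  have "cadj G *\<^sub>v (G *\<^sub>v v) = (cadj G * G) *\<^sub>v v"
    by (rule assoc_mult_mat_vec[OF cadj_carrier[OF G] G vc, symmetric])
  also have "\<dots> = v"
    unfolding GG using vc by (rule one_mult_mat_vec)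
  finally have inv: "cadj G *\<^sub>v (G *\<^sub>v v) = v" .
  have "complex_of_real ((vec_norm (G *\<^sub>v v))\<^sup>2) = (\<Sum>i<d. cnj ((G *\<^sub>v v) $ i) * (G *\<^sub>v v) $ i)"
    unfolding vec_norm_sq_complex Gv ..
  also have "\<dots> = (\<Sum>j<d. cnj (v $ j) * v $ j)"
    unfolding cadj_mult_vec_adjoint[OF G v Gv] inv ..
  also have "\<dots> = complex_of_real ((vec_norm v)\<^sup>2)"
    unfolding vec_norm_sq_complex v ..
  finally show "(vec_norm (G *\<^sub>v v))\<^sup>2 = (vec_norm v)\<^sup>2"
    by (simp only: of_real_eq_iff)
qed

lemma mult_vec_minus_vec_norm:
  assumes "M \<in> carrier_mat n n" "dim_vec x = n" "dim_vec y = n"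
  shows "vec_norm (M *\<^sub>v x - M *\<^sub>v y) = vec_norm (M *\<^sub>v (x - y))"
proof -
  have "M *\<^sub>v (x - y) = M *\<^sub>v x - M *\<^sub>v y"
    using assms by (intro mult_minus_distrib_mat_vec) (auto intro: carrier_vecI)
  then show ?thesis by simp
qed

lemma vec_norm_minus_self [simp]: "vec_norm (x - x) = 0"
  unfolding vec_norm_minus[OF refl] by (simp add: L2_set_0')

lemma unitary_vec_norm_diff:
  assumes "is_unitary d G" "dim_vec x = d" "dim_vec y = d"
  shows "vec_norm (G *\<^sub>v x - G *\<^sub>v y) = vec_norm (x - y)"
  using assms mult_vec_minus_vec_norm[OF unitary_carrier[OF assms(1)] assms(2,3)]
  by (simp add: unitary_vec_norm)

section \<open>Operator distance and query operators\<close>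

definition mat_dist_le :: "nat \<Rightarrow> complex mat \<Rightarrow> complex mat \<Rightarrow> real \<Rightarrow> bool" where
  "mat_dist_le d U V \<delta> \<longleftrightarrow>
     (\<forall>s. dim_vec s = d \<longrightarrow> vec_norm (U *\<^sub>v s - V *\<^sub>v s) \<le> \<delta> * vec_norm s)"

lemma mat_dist_le_mono:
  assumes "mat_dist_le d U V \<delta>" "\<delta> \<le> \<delta>'"
  shows "mat_dist_le d U V \<delta>'"
  unfolding mat_dist_le_def
proof (intro allI impI)
  fix s :: "complex vec" assume "dim_vec s = d"
  then have "vec_norm (U *\<^sub>v s - V *\<^sub>v s) \<le> \<delta> * vec_norm s"
    using assms(1) by (simp add: mat_dist_le_def)
  also have "\<dots> \<le> \<delta>' * vec_norm s"
    using assms(2) by (simp add: mult_right_mono)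
  finally show "vec_norm (U *\<^sub>v s - V *\<^sub>v s) \<le> \<delta>' * vec_norm s" .
qed

definition slice_vec :: "nat \<Rightarrow> nat \<Rightarrow> nat \<Rightarrow> 'a vec \<Rightarrow> 'a vec" where
  "slice_vec D w k x = vec D (\<lambda>i. x $ (i * w + k))"

lemma dim_slice_vec [simp]: "dim_vec (slice_vec D w k x) = D"
  by (simp add: slice_vec_def)

lemma index_slice_vec [simp]: "i < D \<Longrightarrow> slice_vec D w k x $ i = x $ (i * w + k)"
  by (simp add: slice_vec_def)

lemma slice_vec_minus:
  assumes "dim_vec x = D * w" "dim_vec y = D * w" "k < w"
  shows "slice_vec D w k (x - y) = slice_vec D w k x - slice_vec D w k y"
  using assms by (intro eq_vecI) (simp_all add: mult_add_less_mult)

lemma vec_norm_sq_slices: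
  assumes "dim_vec x = D * w"
  shows "(vec_norm x)\<^sup>2 = (\<Sum>k<w. (vec_norm (slice_vec D w k x))\<^sup>2)"
proof -
  have "(vec_norm x)\<^sup>2 = (\<Sum>i<D. \<Sum>k<w. (cmod (x $ (i * w + k)))\<^sup>2)"
    unfolding vec_norm_sq assms by (rule sum_lessThan_mult_split)
  also have "\<dots> = (\<Sum>k<w. \<Sum>i<D. (cmod (x $ (i * w + k)))\<^sup>2)"
    by (rule sum.swap)
  also have "\<dots> = (\<Sum>k<w. (vec_norm (slice_vec D w k x))\<^sup>2)"
    by (simp add: vec_norm_sq)
  finally show ?thesis .
qed

lemma vec_norm_le_by_slices:
  assumes x: "dim_vec x = D * w" and y: "dim_vec y = D * w" and "0 \<le> \<delta>"
    and slices: "\<And>k. k < w \<Longrightarrow> vec_norm (slice_vec D w k x) \<le> \<delta> * vec_norm (slice_vec D w k y)"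
  shows "vec_norm x \<le> \<delta> * vec_norm y"
proof (rule power2_le_imp_le)
  have "(vec_norm x)\<^sup>2 \<le> (\<Sum>k<w. (\<delta> * vec_norm (slice_vec D w k y))\<^sup>2)"
    unfolding vec_norm_sq_slices[OF x] by (intro sum_mono power_mono slices) auto
  also have "\<dots> = (\<delta> * vec_norm y)\<^sup>2"
    by (simp add: power_mult_distrib sum_distrib_left vec_norm_sq_slices[OF y])
  finally show "(vec_norm x)\<^sup>2 \<le> (\<delta> * vec_norm y)\<^sup>2" .
qed (use assms in simp)

lemma dim_query_op [simp]:
  "dim_row (query_op D w C Orc) = D * w" "dim_col (query_op D w C Orc) = D * w"
  by (simp_all add: query_op_def)

lemma query_op_carrier: "query_op D w C Orc \<in> carrier_mat (D * w) (D * w)"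
  by (simp add: carrier_matI)

lemma query_op_index_blocks:
  assumes "i < D" "j < D" "k < w" "l < w"
  shows "query_op D w C Orc $$ (i * w + k, j * w + l) =
    (if l = k then (if k \<in> C then Orc $$ (i, j) else if i = j then 1 else 0) else 0)"
  using assms by (simp add: query_op_def mult_add_less_mult)

lemma slice_query_op:
  assumes k: "k < w" and x: "dim_vec x = D * w" and Orc: "Orc \<in> carrier_mat D D"
  shows "slice_vec D w k (query_op D w C Orc *\<^sub>v x) =
    (if k \<in> C then Orc *\<^sub>v slice_vec D w k x else slice_vec D w k x)"
proof (rule eq_vecI)
  fix i assume "i < dim_vec (if k \<in> C then Orc *\<^sub>v slice_vec D w k x else slice_vec D w k x)"
  then have i: "i < D" using Orc by (simp split: if_splits)
  let ?c = "\<lambda>j. if k \<in> C then Orc $$ (i, j) else if i = j then 1 else 0"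
  have "(query_op D w C Orc *\<^sub>v x) $ (i * w + k)
      = (\<Sum>r<D * w. query_op D w C Orc $$ (i * w + k, r) * x $ r)"
    by (rule mult_vec_index_sum) (auto intro: carrier_matI simp: x i k mult_add_less_mult)
  also have "\<dots> = (\<Sum>j<D. \<Sum>l<w. query_op D w C Orc $$ (i * w + k, j * w + l) * x $ (j * w + l))"
    by (rule sum_lessThan_mult_split)
  also have "\<dots> = (\<Sum>j<D. ?c j * x $ (j * w + k))"
    using i k by (intro sum.cong refl, subst sum_lessThan_eq_single[of k]) (auto simp: query_op_index_blocks)
  also have "\<dots> = (if k \<in> C then Orc *\<^sub>v slice_vec D w k x else slice_vec D w k x) $ i"
  proof (cases "k \<in> C")
    case True
    have "(Orc *\<^sub>v slice_vec D w k x) $ i = (\<Sum>j<D. Orc $$ (i, j) * slice_vec D w k x $ j)"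
      by (rule mult_vec_index_sum[OF Orc _ i]) simp
    with True show ?thesis
      by simp
  next
    case False
    then show ?thesis
      using i by (simp add: sum_lessThan_eq_single[of i])
  qed
  finally show "slice_vec D w k (query_op D w C Orc *\<^sub>v x) $ i =
      (if k \<in> C then Orc *\<^sub>v slice_vec D w k x else slice_vec D w k x) $ i"
    using i by simp
qed (use Orc in simp)

lemma query_op_vec_norm:
  assumes U: "is_unitary D U" and x: "dim_vec x = D * w"
  shows "vec_norm (query_op D w C U *\<^sub>v x) = vec_norm x"
proof (rule vec_norm_eqI)
  have "vec_norm (slice_vec D w k (query_op D w C U *\<^sub>v x)) = vec_norm (slice_vec D w k x)" if "k < w" for k
    using that x U by (simp add: slice_query_op unitary_carrier unitary_vec_norm)
  then show "(vec_norm (query_op D w C U *\<^sub>v x))\<^sup>2 = (vec_norm x)\<^sup>2"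
    using x by (simp add: vec_norm_sq_slices[of _ D w])
qed

lemma query_op_dist_le:
  assumes U: "U \<in> carrier_mat D D" and V: "V \<in> carrier_mat D D" and "0 \<le> \<delta>"
    and dist: "mat_dist_le D U V \<delta>"
  shows "mat_dist_le (D * w) (query_op D w C U) (query_op D w C V) \<delta>"
  unfolding mat_dist_le_def
proof (intro allI impI)
  fix x :: "complex vec" assume x: "dim_vec x = D * w"
  show "vec_norm (query_op D w C U *\<^sub>v x - query_op D w C V *\<^sub>v x) \<le> \<delta> * vec_norm x"
  proof (rule vec_norm_le_by_slices[OF _ x \<open>0 \<le> \<delta>\<close>])
    fix k assume k: "k < w"
    show "vec_norm (slice_vec D w k (query_op D w C U *\<^sub>v x - query_op D w C V *\<^sub>v x))
        \<le> \<delta> * vec_norm (slice_vec D w k x)"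
      using k x U V dist \<open>0 \<le> \<delta>\<close>
      by (simp add: slice_vec_minus slice_query_op mat_dist_le_def)
  qed simp
qed

section \<open>The hybrid argument\<close>

lemma run_state_dim:
  assumes "wf_qalg D A" "t \<le> num_queries A"
  shows "dim_vec (run_state D A U t) = D * work_dim A"
proof -
  have "gates A t \<in> carrier_mat (D * work_dim A) (D * work_dim A)"
    using assms by (simp add: wf_qalg_def unitary_carrier)
  then show ?thesis
    by (cases t) simp_all
qed

lemma run_state_vec_norm_le:
  assumes wf: "wf_qalg D A" and U: "is_unitary D U"
  shows "t \<le> num_queries A \<Longrightarrow> vec_norm (run_state D A U t) \<le> 1"
proof (induction t)
  case 0
  then have "is_unitary (D * work_dim A) (gates A 0)"
    using wf by (simp add: wf_qalg_def)
  then show ?case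
    using vec_norm_unit_vec_le by (simp add: unitary_vec_norm)
next
  case (Suc t)
  let ?x = "run_state D A U t"
  have G: "is_unitary (D * work_dim A) (gates A (Suc t))"
    using wf Suc.prems by (simp add: wf_qalg_def)
  have x: "dim_vec ?x = D * work_dim A"
    using run_state_dim[OF wf] Suc.prems by simp
  have O: "is_unitary D (if dagger A t then cadj U else U)"
    using U by (simp add: unitary_cadj)
  have "vec_norm (run_state D A U (Suc t)) = vec_norm ?x"
    using x by (simp add: unitary_vec_norm[OF G] query_op_vec_norm[OF O])
  with Suc show ?case
    by simp
qed

lemma run_state_dist_le:
  assumes wf: "wf_qalg D A" and U: "is_unitary D U" and V: "is_unitary D V" and "0 \<le> \<delta>"
    and dist: "mat_dist_le D U V \<delta>" and dist_cadj: "mat_dist_le D (cadj U) (cadj V) \<delta>"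
  shows "t \<le> num_queries A \<Longrightarrow>
    vec_norm (run_state D A U t - run_state D A V t) \<le> real t * \<delta>"
proof (induction t)
  case 0
  then show ?case
    by simp
next
  case (Suc t)
  let ?w = "work_dim A" and ?x = "run_state D A U t" and ?y = "run_state D A V t"
  define OU where "OU = (if dagger A t then cadj U else U)"
  define OV where "OV = (if dagger A t then cadj V else V)"
  let ?Q = "query_op D ?w (ctrl A t)"
  have OU: "is_unitary D OU" and OV: "is_unitary D OV"
    unfolding OU_def OV_def using U V by (simp_all add: unitary_cadj)
  have dist_O: "mat_dist_le D OU OV \<delta>"
    unfolding OU_def OV_def using dist dist_cadj by simp
  have G: "is_unitary (D * ?w) (gates A (Suc t))"
    using wf Suc.prems by (simp add: wf_qalg_def)
  have x: "dim_vec ?x = D * ?w" and y: "dim_vec ?y = D * ?w"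
    using run_state_dim[OF wf] Suc.prems by simp_all
  have "vec_norm (run_state D A U (Suc t) - run_state D A V (Suc t))
      = vec_norm (?Q OU *\<^sub>v ?x - ?Q OV *\<^sub>v ?y)"
    unfolding OU_def OV_def using x y by (simp add: unitary_vec_norm_diff[OF G])
  also have "\<dots> \<le> vec_norm (?Q OU *\<^sub>v ?x - ?Q OU *\<^sub>v ?y) + vec_norm (?Q OU *\<^sub>v ?y - ?Q OV *\<^sub>v ?y)"
    using x y by (intro vec_norm_diff_triangle) simp_all
  also have "vec_norm (?Q OU *\<^sub>v ?x - ?Q OU *\<^sub>v ?y) = vec_norm (?x - ?y)"
    using x y by (simp add: mult_vec_minus_vec_norm[OF query_op_carrier x y] query_op_vec_norm[OF OU])
  also have "\<dots> \<le> real t * \<delta>"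
    using Suc by simp
  also have "vec_norm (?Q OU *\<^sub>v ?y - ?Q OV *\<^sub>v ?y) \<le> \<delta> * vec_norm ?y"
    using query_op_dist_le[OF unitary_carrier[OF OU] unitary_carrier[OF OV] \<open>0 \<le> \<delta>\<close> dist_O] y
    by (simp add: mat_dist_le_def)
  also have "\<dots> \<le> \<delta>"
    using run_state_vec_norm_le[OF wf V] Suc.prems \<open>0 \<le> \<delta>\<close> by (simp add: mult_left_le)
  finally show ?case
    by (simp add: algebra_simps)
qed

lemma sum_sq_diff_le_vec_norm:
  assumes S: "S \<subseteq> {..<dim_vec b}" and ab: "dim_vec a = dim_vec b"
    and a1: "vec_norm a \<le> 1" and b1: "vec_norm b \<le> 1"
  shows "(\<Sum>j\<in>S. (cmod (a $ j))\<^sup>2) - (\<Sum>j\<in>S. (cmod (b $ j))\<^sup>2) \<le> 2 * vec_norm (a - b)"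
proof -
  define x where "x = L2_set (\<lambda>j. cmod (a $ j)) S"
  define y where "y = L2_set (\<lambda>j. cmod (b $ j)) S"
  define z where "z = L2_set (\<lambda>j. cmod (a $ j - b $ j)) S"
  have sub: "L2_set f S \<le> L2_set f {..<dim_vec b}" for f
    using S unfolding L2_set_def by (intro real_sqrt_le_mono sum_mono2) auto
  have "x \<le> 1"
    using sub[of "\<lambda>j. cmod (a $ j)"] a1 ab unfolding x_def vec_norm_def by simp
  have "y \<le> 1"
    using sub[of "\<lambda>j. cmod (b $ j)"] b1 unfolding y_def vec_norm_def by simp
  have "z \<le> vec_norm (a - b)"
    using sub[of "\<lambda>j. cmod (a $ j - b $ j)"] unfolding z_def vec_norm_minus[OF ab] .
  have "x \<le> L2_set (\<lambda>j. cmod (a $ j - b $ j) + cmod (b $ j)) S"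
    unfolding x_def by (rule L2_set_mono) (metis add.commute norm_triangle_sub, simp)
  also have "\<dots> \<le> z + y"
    unfolding z_def y_def by (rule L2_set_triangle_ineq)
  finally have "x - y \<le> z" by simp
  have sq: "(\<Sum>j\<in>S. (f j)\<^sup>2) = (L2_set f S)\<^sup>2" for f :: "nat \<Rightarrow> real"
    unfolding L2_set_def by (simp add: sum_nonneg)
  have "(\<Sum>j\<in>S. (cmod (a $ j))\<^sup>2) - (\<Sum>j\<in>S. (cmod (b $ j))\<^sup>2) = (x - y) * (x + y)"
    unfolding sq x_def y_def by (simp add: power2_eq_square algebra_simps)
  also have "\<dots> \<le> z * 2"
  proof (cases "x \<le> y")
    case True
    then have "(x - y) * (x + y) \<le> 0"
      by (intro mult_nonpos_nonneg) (auto simp: x_def y_def)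
    moreover have "0 \<le> z"
      by (simp add: z_def)
    ultimately show ?thesis
      by simp
  next
    case False
    then show ?thesis
      using \<open>x - y \<le> z\<close> \<open>x \<le> 1\<close> \<open>y \<le> 1\<close> by (intro mult_mono) (auto simp: x_def y_def)
  qed
  finally show ?thesis
    using \<open>z \<le> vec_norm (a - b)\<close> by simp
qed

lemma accept_prob_diff_le:
  assumes wf: "wf_qalg D A" and U: "is_unitary D U" and V: "is_unitary D V" and "0 \<le> \<delta>"
    and dist: "mat_dist_le D U V \<delta>" and dist_cadj: "mat_dist_le D (cadj U) (cadj V) \<delta>"
  shows "accept_prob D A U - accept_prob D A V \<le> 2 * real (num_queries A) * \<delta>"
proof -
  let ?T = "num_queries A"
  have "accept_prob D A U - accept_prob D A V
      \<le> 2 * vec_norm (run_state D A U ?T - run_state D A V ?T)"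
    unfolding accept_prob_def
    by (rule sum_sq_diff_le_vec_norm)
       (simp_all add: run_state_dim[OF wf] run_state_vec_norm_le[OF wf U] run_state_vec_norm_le[OF wf V])
  also have "\<dots> \<le> 2 * (real ?T * \<delta>)"
    using run_state_dist_le[OF assms] by simp
  finally show ?thesis
    by simp
qed

section \<open>Reflections\<close>

text \<open>For \<open>\<Sum>\<^sub>j p\<^sub>j\<^sup>2 = 2\<close> this is the reflection \<open>I - 2 u u\<^sup>T\<close> with the unit vector \<open>u = p / \<surd>2\<close>.\<close>

definition reflection_mat :: "nat \<Rightarrow> (nat \<Rightarrow> real) \<Rightarrow> complex mat" where
  "reflection_mat d p = mat d d (\<lambda>(i, j). (if i = j then 1 else 0) - complex_of_real (p i * p j))"

lemma reflection_mat_carrier: "reflection_mat d p \<in> carrier_mat d d"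
  by (simp add: reflection_mat_def)

lemma cadj_reflection_mat [simp]: "cadj (reflection_mat d p) = reflection_mat d p"
  by (rule eq_matI) (auto simp: cadj_def reflection_mat_def)

lemma reflection_entries_orthonormal:
  fixes p :: "nat \<Rightarrow> real"
  assumes p: "(\<Sum>j<d. (p j)\<^sup>2) = 2" and i: "i < d" and k: "k < d"
  shows "(\<Sum>j<d. ((if i = j then 1 else 0) - p i * p j) * ((if j = k then 1 else 0) - p j * p k))
    = (if i = k then 1 else 0)"
proof -
  have "(\<Sum>j<d. ((if i = j then 1 else 0) - p i * p j) * ((if j = k then 1 else 0) - p j * p k))
     = (\<Sum>j<d. (if i = j then 1 else 0) * (if j = k then 1 else 0))
       - (\<Sum>j<d. (if i = j then 1 else 0) * (p j * p k))
       - (\<Sum>j<d. p i * p j * (if j = k then 1 else 0)) + (\<Sum>j<d. p i * p k * (p j)\<^sup>2)"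
    by (simp add: sum.distrib sum_subtractf algebra_simps power2_eq_square)
  also have "\<dots> = (if i = k then 1 else 0) - p i * p k - p i * p k + p i * p k * 2"
    using i k by (simp add: sum_lessThan_eq_single[of i] sum_lessThan_eq_single[of k]
        flip: sum_distrib_left p)
  finally show ?thesis
    by simp
qed

lemma reflection_mat_unitary:
  assumes p: "(\<Sum>j<d. (p j)\<^sup>2) = 2"
  shows "is_unitary d (reflection_mat d p)"
proof -
  let ?R = "reflection_mat d p"
  have "?R * ?R = 1\<^sub>m d"
  proof (rule eq_matI)
    fix i k assume "i < dim_row (1\<^sub>m d)" "k < dim_col (1\<^sub>m d)"
    then have i: "i < d" and k: "k < d" by simp_all
    have "(?R * ?R) $$ (i, k) = (\<Sum>j<d. ?R $$ (i, j) * ?R $$ (j, k))"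
      using i k by (simp add: reflection_mat_def scalar_prod_def atLeast0LessThan)
    also have "\<dots> = complex_of_real (\<Sum>j<d.
        ((if i = j then 1 else 0) - p i * p j) * ((if j = k then 1 else 0) - p j * p k))"
      unfolding of_real_sum using i k by (intro sum.cong refl) (simp add: reflection_mat_def)
    also have "\<dots> = 1\<^sub>m d $$ (i, k)"
      using i k by (simp add: reflection_entries_orthonormal[OF p])
    finally show "(?R * ?R) $$ (i, k) = 1\<^sub>m d $$ (i, k)" .
  qed (simp_all add: reflection_mat_def)
  then show ?thesis
    by (simp add: is_unitary_def reflection_mat_carrier)
qed

lemma index_reflection_mat_mult_vec:
  assumes "dim_vec s = d" "i < d"
  shows "(reflection_mat d p *\<^sub>v s) $ i
    = s $ i - complex_of_real (p i) * (\<Sum>j<d. complex_of_real (p j) * s $ j)"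
proof -
  have "(reflection_mat d p *\<^sub>v s) $ i = (\<Sum>j<d. reflection_mat d p $$ (i, j) * s $ j)"
    by (rule mult_vec_index_sum[OF reflection_mat_carrier assms])
  also have "\<dots> = (\<Sum>j<d. (if j = i then s $ j else 0)
      - complex_of_real (p i) * (complex_of_real (p j) * s $ j))"
    using assms by (intro sum.cong refl) (auto simp: reflection_mat_def algebra_simps)
  also have "\<dots> = s $ i - complex_of_real (p i) * (\<Sum>j<d. complex_of_real (p j) * s $ j)"
    using assms by (simp add: sum_subtractf sum_distrib_left)
  finally show ?thesis .
qed

lemma cmod_sum_le_L2_set:
  fixes p :: "nat \<Rightarrow> real"
  assumes "dim_vec s = d"
  shows "cmod (\<Sum>j<d. complex_of_real (p j) * s $ j) \<le> L2_set p {..<d} * vec_norm s"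
proof -
  have "cmod (\<Sum>j<d. complex_of_real (p j) * s $ j) \<le> (\<Sum>j<d. \<bar>p j\<bar> * \<bar>cmod (s $ j)\<bar>)"
    using norm_sum[of "\<lambda>j. complex_of_real (p j) * s $ j" "{..<d}"] by (simp add: norm_mult)
  also have "\<dots> \<le> L2_set p {..<d} * vec_norm s"
    unfolding vec_norm_def assms by (rule L2_set_mult_ineq)
  finally show ?thesis .
qed

lemma reflection_mat_dist_le:
  fixes p q :: "nat \<Rightarrow> real"
  assumes p: "(\<Sum>j<d. (p j)\<^sup>2) = 2" and q: "(\<Sum>j<d. (q j)\<^sup>2) = 2"
  shows "mat_dist_le d (reflection_mat d p) (reflection_mat d q)
    (2 * sqrt 2 * L2_set (\<lambda>i. q i - p i) {..<d})"
  unfolding mat_dist_le_def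
proof (intro allI impI)
  fix s :: "complex vec" assume s: "dim_vec s = d"
  define A where "A = (\<Sum>j<d. complex_of_real (p j) * s $ j)"
  define B where "B = (\<Sum>j<d. complex_of_real (q j) * s $ j)"
  define L where "L = L2_set (\<lambda>i. q i - p i) {..<d}"
  have Lp: "L2_set p {..<d} = sqrt 2" and Lq: "L2_set q {..<d} = sqrt 2"
    unfolding L2_set_def p q by simp_all
  have B: "cmod B \<le> sqrt 2 * vec_norm s"
    unfolding B_def using cmod_sum_le_L2_set[OF s, of q] Lq by simp
  have BA_sum: "B - A = (\<Sum>j<d. complex_of_real (q j - p j) * s $ j)"
    unfolding A_def B_def by (simp add: sum_subtractf[symmetric] left_diff_distrib)
  have BA: "cmod (B - A) \<le> L * vec_norm s"
    unfolding L_def BA_sum by (rule cmod_sum_le_L2_set[OF s])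
  have "vec_norm (reflection_mat d p *\<^sub>v s - reflection_mat d q *\<^sub>v s)
      = L2_set (\<lambda>i. cmod ((reflection_mat d p *\<^sub>v s) $ i - (reflection_mat d q *\<^sub>v s) $ i)) {..<d}"
    by (simp add: vec_norm_minus reflection_mat_def)
  also have "\<dots> \<le> L2_set (\<lambda>i. \<bar>q i - p i\<bar> * cmod B + \<bar>p i\<bar> * cmod (B - A)) {..<d}"
  proof (rule L2_set_mono)
    fix i assume "i \<in> {..<d}"
    then have "(reflection_mat d p *\<^sub>v s) $ i - (reflection_mat d q *\<^sub>v s) $ i
        = complex_of_real (q i - p i) * B + complex_of_real (p i) * (B - A)"
      using s by (simp add: index_reflection_mat_mult_vec flip: A_def B_def) (simp add: algebra_simps)
    then show "cmod ((reflection_mat d p *\<^sub>v s) $ i - (reflection_mat d q *\<^sub>v s) $ i)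
        \<le> \<bar>q i - p i\<bar> * cmod B + \<bar>p i\<bar> * cmod (B - A)"
      using norm_triangle_ineq[of "complex_of_real (q i - p i) * B" "complex_of_real (p i) * (B - A)"]
      by (simp add: norm_mult del: of_real_diff)
  qed simp
  also have "\<dots> \<le> L2_set (\<lambda>i. \<bar>q i - p i\<bar> * cmod B) {..<d} + L2_set (\<lambda>i. \<bar>p i\<bar> * cmod (B - A)) {..<d}"
    by (rule L2_set_triangle_ineq)
  also have "\<dots> = L * cmod B + sqrt 2 * cmod (B - A)"
  proof -
    have abs: "L2_set (\<lambda>i. \<bar>f i\<bar>) {..<d} = L2_set f {..<d}" for f :: "nat \<Rightarrow> real"
      by (simp add: L2_set_def)
    show ?thesis
      unfolding L_def Lp[symmetric] by (simp add: L2_set_left_distrib[symmetric] abs)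
  qed
  also have "\<dots> \<le> L * (sqrt 2 * vec_norm s) + sqrt 2 * (L * vec_norm s)"
    using B BA by (intro add_mono mult_left_mono) (auto simp: L_def)
  finally show "vec_norm (reflection_mat d p *\<^sub>v s - reflection_mat d q *\<^sub>v s)
      \<le> 2 * sqrt 2 * L * vec_norm s"
    by (simp add: algebra_simps)
qed

section \<open>The hard instances\<close>

definition tail_amp :: "nat \<Rightarrow> real \<Rightarrow> real" where
  "tail_amp K a = sqrt ((1 - a\<^sup>2) / K)"

definition hard_profile :: "nat \<Rightarrow> real \<Rightarrow> nat \<Rightarrow> real" where
  "hard_profile K a x =
    (if x = 0 then 1 else if x = 1 then a else if x \<le> K + 1 then tail_amp K a else 0)"

text \<open>
  \<open>hard_vec m K a\<close> lives on the states \<open>|x\<rangle>|0\<rangle>\<close>, so the output state of its reflection is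
  \<open>-\<Sum>\<^bsub>x \<ge> 1\<^esub> hard_profile K a x |x\<rangle>|0\<rangle>\<close>: one amplitude \<open>a\<close> and \<open>K\<close> amplitudes \<open>tail_amp K a\<close>,
  the value making the state a unit vector.
\<close>

definition hard_vec :: "nat \<Rightarrow> nat \<Rightarrow> real \<Rightarrow> nat \<Rightarrow> real" where
  "hard_vec m K a i = (if i mod m = 0 then hard_profile K a (i div m) else 0)"

lemma sum_hard_vec:
  fixes H :: "real \<Rightarrow> real \<Rightarrow> real"
  assumes H0: "H 0 0 = 0" and n: "K + 2 \<le> n" and m: "1 \<le> m"
  shows "(\<Sum>i<n * m. H (hard_vec m K a i) (hard_vec m K b i))
    = H 1 1 + H a b + real K * H (tail_amp K a) (tail_amp K b)"
proof -
  let ?F = "\<lambda>x. H (hard_profile K a x) (hard_profile K b x)"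
  have "(\<Sum>i<n * m. H (hard_vec m K a i) (hard_vec m K b i))
      = (\<Sum>x<n. \<Sum>j<m. H (hard_vec m K a (x * m + j)) (hard_vec m K b (x * m + j)))"
    by (rule sum_lessThan_mult_split)
  also have "\<dots> = (\<Sum>x<n. ?F x)"
    using m by (intro sum.cong refl, subst sum_lessThan_eq_single[of 0]) (auto simp: hard_vec_def H0)
  also have "\<dots> = (\<Sum>x<K + 2. ?F x)"
    using n H0 by (intro sum.mono_neutral_right) (auto simp: hard_profile_def)
  also have "\<dots> = ?F 0 + ?F 1 + (\<Sum>x\<in>{2..<K + 2}. ?F x)"
  proof -
    have "{..<K + 2} = {0, 1} \<union> {2..<K + 2}" by auto
    then show ?thesis
      by (simp add: sum.union_disjoint)
  qed
  also have "(\<Sum>x\<in>{2..<K + 2}. ?F x) = real K * H (tail_amp K a) (tail_amp K b)"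
    by (simp add: hard_profile_def)
  finally show ?thesis
    by (simp add: hard_profile_def)
qed

lemma hard_vec_norm_sq:
  assumes "K + 2 \<le> n" "1 \<le> m" "1 \<le> K" "\<bar>a\<bar> \<le> 1"
  shows "(\<Sum>i<n * m. (hard_vec m K a i)\<^sup>2) = 2"
proof -
  have "(tail_amp K a)\<^sup>2 = (1 - a\<^sup>2) / K"
    using assms(4) by (simp add: tail_amp_def abs_square_le_1)
  then show ?thesis
    using sum_hard_vec[where H = "\<lambda>u v. u\<^sup>2" and a = a and b = a, OF _ assms(1,2)] assms(3)
    by simp
qed

lemma tail_amp_dist_le:
  assumes K: "1 \<le> K" and a: "0 \<le> a" "a \<le> 1/2" and b: "0 \<le> b" "b \<le> 1/2"
  shows "real K * (tail_amp K a - tail_amp K b)\<^sup>2 \<le> (a - b)\<^sup>2"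
proof -
  define X where "X = sqrt (1 - a\<^sup>2)"
  define Y where "Y = sqrt (1 - b\<^sup>2)"
  have a2: "a\<^sup>2 \<le> (1/2)\<^sup>2" and b2: "b\<^sup>2 \<le> (1/2)\<^sup>2"
    using a b by (simp_all add: power_mono)
  have "1/2 \<le> X"
    unfolding X_def by (rule real_le_rsqrt) (use a2 in \<open>simp add: power2_eq_square\<close>)
  moreover have "1/2 \<le> Y"
    unfolding Y_def by (rule real_le_rsqrt) (use b2 in \<open>simp add: power2_eq_square\<close>)
  moreover have "X\<^sup>2 = 1 - a\<^sup>2" "Y\<^sup>2 = 1 - b\<^sup>2"
    unfolding X_def Y_def using a2 b2 by (simp_all add: power2_eq_square)
  ultimately have X: "1/2 \<le> X" "X\<^sup>2 = 1 - a\<^sup>2" and Y: "1/2 \<le> Y" "Y\<^sup>2 = 1 - b\<^sup>2"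
    by simp_all
  have tail: "tail_amp K a = X / sqrt K" "tail_amp K b = Y / sqrt K"
    unfolding tail_amp_def X_def Y_def by (simp_all add: real_sqrt_divide)
  \<comment> \<open>\<open>X - Y = (X\<^sup>2 - Y\<^sup>2) / (X + Y)\<close> with \<open>X + Y \<ge> 1\<close>.\<close>
  have "real K * (tail_amp K a - tail_amp K b)\<^sup>2 = (X - Y)\<^sup>2"
    unfolding tail diff_divide_distrib[symmetric] power_divide using K by simp
  also have "\<dots> \<le> (X - Y)\<^sup>2 * (X + Y)\<^sup>2"
  proof -
    have "1 \<le> (X + Y)\<^sup>2"
      using X Y by (simp add: one_le_power)
    then show ?thesis
      by (metis mult_left_mono mult.right_neutral zero_le_power2)
  qed
  also have "\<dots> = (X\<^sup>2 - Y\<^sup>2)\<^sup>2"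
    by (simp add: power2_eq_square algebra_simps)
  also have "\<dots> = (a - b)\<^sup>2 * (a + b)\<^sup>2"
    unfolding X(2) Y(2) by (simp add: power2_eq_square algebra_simps)
  also have "\<dots> \<le> (a - b)\<^sup>2"
    using a b by (intro mult_left_le) (auto simp: abs_square_le_1)
  finally show ?thesis .
qed

lemma hard_vec_dist_le:
  assumes "K + 2 \<le> n" "1 \<le> m" "1 \<le> K"
    and "0 \<le> a" "a \<le> 1/2" "0 \<le> b" "b \<le> 1/2"
  shows "L2_set (\<lambda>i. hard_vec m K b i - hard_vec m K a i) {..<n * m} \<le> sqrt 2 * \<bar>a - b\<bar>"
proof -
  have "(\<Sum>i<n * m. (hard_vec m K b i - hard_vec m K a i)\<^sup>2)
      = (a - b)\<^sup>2 + real K * (tail_amp K a - tail_amp K b)\<^sup>2"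
    using sum_hard_vec[where H = "\<lambda>u v. (v - u)\<^sup>2" and a = a and b = b, OF _ assms(1,2)]
    by (simp add: power2_commute)
  also have "\<dots> \<le> 2 * (a - b)\<^sup>2"
    using tail_amp_dist_le[of K a b] assms by simp
  finally have "sqrt (\<Sum>i<n * m. (hard_vec m K b i - hard_vec m K a i)\<^sup>2) \<le> sqrt (2 * (a - b)\<^sup>2)"
    by (rule real_sqrt_le_mono)
  then show ?thesis
    unfolding L2_set_def by (simp add: real_sqrt_mult)
qed

definition hard_oracle :: "nat \<Rightarrow> nat \<Rightarrow> nat \<Rightarrow> real \<Rightarrow> complex mat" where
  "hard_oracle n m K a = reflection_mat (n * m) (hard_vec m K a)"

lemma hard_oracle_unitary:
  assumes "K + 2 \<le> n" "1 \<le> m" "1 \<le> K" "\<bar>a\<bar> \<le> 1"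
  shows "is_unitary (n * m) (hard_oracle n m K a)"
  unfolding hard_oracle_def using assms by (simp add: reflection_mat_unitary hard_vec_norm_sq)

lemma cadj_hard_oracle [simp]: "cadj (hard_oracle n m K a) = hard_oracle n m K a"
  by (simp add: hard_oracle_def)

lemma hard_oracle_dist_le:
  assumes n: "K + 2 \<le> n" and m: "1 \<le> m" and K: "1 \<le> K" and ab: "0 \<le> b" "b \<le> a" "a \<le> 1/2"
  shows "mat_dist_le (n * m) (hard_oracle n m K a) (hard_oracle n m K b) (4 * (a - b))"
proof -
  let ?L = "L2_set (\<lambda>i. hard_vec m K b i - hard_vec m K a i) {..<n * m}"
  have dist: "mat_dist_le (n * m) (hard_oracle n m K a) (hard_oracle n m K b) (2 * sqrt 2 * ?L)"
    unfolding hard_oracle_def using n m K ab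
    by (intro reflection_mat_dist_le) (simp_all add: hard_vec_norm_sq)
  have "?L \<le> sqrt 2 * (a - b)"
    using hard_vec_dist_le[OF n m K, of a b] ab by simp
  then have "2 * sqrt 2 * ?L \<le> 2 * sqrt 2 * (sqrt 2 * (a - b))"
    by (intro mult_left_mono) auto
  also have "\<dots> = 2 * (sqrt 2 * sqrt 2) * (a - b)"
    by (simp only: mult_ac)
  also have "\<dots> = 4 * (a - b)"
    by simp
  finally show ?thesis
    by (rule mat_dist_le_mono[OF dist])
qed

lemma amp_abs_hard_oracle:
  assumes m: "1 \<le> m" and x: "x < n"
  shows "amp_abs n m (hard_oracle n m K a) x = (if x = 0 then 0 else \<bar>hard_profile K a x\<bar>)"
proof -
  let ?p = "hard_vec m K a"
  have p0: "?p 0 = 1"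
    using m by (simp add: hard_vec_def hard_profile_def)
  have nm: "0 < n * m"
    using m x by simp
  have state: "oracle_state n m (hard_oracle n m K a) $ i
      = complex_of_real ((if i = 0 then 1 else 0) - ?p i)" if "i < n * m" for i
  proof -
    have "(\<Sum>j<n * m. complex_of_real (?p j) * unit_vec (n * m) 0 $ j) = 1"
      using nm p0 by (subst sum_lessThan_eq_single[of 0]) auto
    then show ?thesis
      unfolding oracle_state_def hard_oracle_def using that nm by (simp add: index_reflection_mat_mult_vec)
  qed
  have "(\<Sum>j<m. (cmod (oracle_state n m (hard_oracle n m K a) $ (x * m + j)))\<^sup>2)
      = (\<Sum>j<m. ((if x * m + j = 0 then 1 else 0) - ?p (x * m + j))\<^sup>2)"
    using x by (intro sum.cong refl) (simp add: state mult_add_less_mult del: of_real_diff)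
  also have "\<dots> = ((if x = 0 then 1 else 0) - ?p (x * m))\<^sup>2"
    using m by (subst sum_lessThan_eq_single[of 0]) (auto simp: hard_vec_def)
  also have "\<dots> = (if x = 0 then 0 else hard_profile K a x)\<^sup>2"
    using m p0 by (simp add: hard_vec_def)
  finally show ?thesis
    unfolding amp_abs_def by simp
qed

lemma ampfil_yes_hard_oracle:
  assumes "2 \<le> n" "1 \<le> m"
  shows "ampfil_yes n m a (hard_oracle n m K a)"
  unfolding ampfil_yes_def
proof (intro exI conjI)
  show "1 < n"
    using assms by simp
  then show "a \<le> amp_abs n m (hard_oracle n m K a) 1"
    using assms by (simp add: amp_abs_hard_oracle hard_profile_def)
qed

lemma ampfil_no_hard_oracle:
  assumes m: "1 \<le> m" and b: "0 \<le> b" "b < \<tau> - \<epsilon>" "\<tau> - \<epsilon> \<le> 1"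
    and K: "1 < real K * (\<tau> - \<epsilon>)\<^sup>2"
  shows "ampfil_no n m \<epsilon> \<tau> (hard_oracle n m K b)"
  unfolding ampfil_no_def
proof (intro allI impI)
  fix x assume "x < n"
  have "0 < real K"
    using K by (cases K) auto
  moreover have "1 - b\<^sup>2 < real K * (\<tau> - \<epsilon>)\<^sup>2"
    using K zero_le_power2[of b] by linarith
  ultimately have "(1 - b\<^sup>2) / K < (\<tau> - \<epsilon>)\<^sup>2"
    by (simp add: divide_less_eq mult.commute)
  then have "sqrt ((1 - b\<^sup>2) / K) < sqrt ((\<tau> - \<epsilon>)\<^sup>2)"
    by (rule real_sqrt_less_mono)
  then have "tail_amp K b < \<tau> - \<epsilon>"
    unfolding tail_amp_def using b by simp
  moreover have "0 \<le> tail_amp K b"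
    unfolding tail_amp_def using b by (simp add: abs_square_le_1)
  ultimately show "amp_abs n m (hard_oracle n m K b) x < \<tau> - \<epsilon>"
    using \<open>x < n\<close> m b by (simp add: amp_abs_hard_oracle hard_profile_def)
qed

lemma solves_ampfil_num_queries_ge:
  fixes \<epsilon> \<tau> :: real
  assumes \<epsilon>: "0 < \<epsilon>" "\<epsilon> < \<tau>" "\<tau> \<le> 1/2" and K: "1 \<le> K" "1 < real K * (\<tau> - \<epsilon>)\<^sup>2"
    and n: "K + 2 \<le> n" and m: "1 \<le> m" and A: "solves_ampfil n m \<epsilon> \<tau> A"
  shows "1 / (48 * \<epsilon>) \<le> real (num_queries A)"
proof -
  \<comment> \<open>Any \<open>b \<in> [0, \<tau> - \<epsilon>)\<close> with \<open>\<tau> - b \<le> 2 \<epsilon>\<close> would do.\<close>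
  define b where "b = (\<tau> - \<epsilon>) * (1 - \<epsilon>)"
  have "0 < (\<tau> - \<epsilon>) * \<epsilon>" "(\<tau> - \<epsilon>) * \<epsilon> \<le> \<epsilon>"
    using \<epsilon> by (simp_all add: mult_left_le_one_le)
  moreover have "b = (\<tau> - \<epsilon>) - (\<tau> - \<epsilon>) * \<epsilon>"
    unfolding b_def by (simp add: algebra_simps)
  moreover have "0 \<le> b"
    unfolding b_def using \<epsilon> by simp
  ultimately have b: "0 \<le> b" "b < \<tau> - \<epsilon>" "\<tau> - b \<le> 2 * \<epsilon>"
    by linarith+
  let ?U = "hard_oracle n m K \<tau>" and ?V = "hard_oracle n m K b" and ?T = "real (num_queries A)"
  have U: "is_unitary (n * m) ?U" and V: "is_unitary (n * m) ?V"
    using n m K \<epsilon> b by (simp_all add: hard_oracle_unitary)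
  have "2/3 \<le> accept_prob (n * m) A ?U"
    using A U ampfil_yes_hard_oracle[OF _ m] n unfolding solves_ampfil_def by simp
  moreover have "accept_prob (n * m) A ?V \<le> 1/3"
    using A V ampfil_no_hard_oracle[OF m b(1,2)] \<epsilon> K unfolding solves_ampfil_def by simp
  moreover have "accept_prob (n * m) A ?U - accept_prob (n * m) A ?V \<le> 2 * ?T * (4 * (\<tau> - b))"
    using A U V hard_oracle_dist_le[OF n m K(1), of b \<tau>] \<epsilon> b
    by (intro accept_prob_diff_le) (simp_all add: solves_ampfil_def)
  ultimately have "1/3 \<le> 2 * ?T * (4 * (\<tau> - b))"
    by linarith
  also have "\<dots> \<le> 2 * ?T * (8 * \<epsilon>)"
    using b by (intro mult_left_mono) auto
  finally show ?thesis
    using \<epsilon> by (simp add: field_simps)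
qed

theorem theorem9:
  "\<exists>c>0. \<forall>\<epsilon> \<tau>::real. 0 < \<epsilon> \<and> \<epsilon> < \<tau> \<and> \<tau> \<le> 1/2 \<longrightarrow>
     (\<exists>N. \<forall>n\<ge>N. \<forall>m\<ge>1. \<forall>A. solves_ampfil n m \<epsilon> \<tau> A \<longrightarrow>
        real (num_queries A) \<ge> c * (1/\<epsilon> + 1/\<tau>))"
proof (intro exI[of _ "1/96"] conjI allI impI)
  fix \<epsilon> \<tau> :: real
  assume \<epsilon>: "0 < \<epsilon> \<and> \<epsilon> < \<tau> \<and> \<tau> \<le> 1/2"
  define K where "K = nat \<lceil>1 / (\<tau> - \<epsilon>)\<^sup>2\<rceil> + 1"
  have "1 / (\<tau> - \<epsilon>)\<^sup>2 < real K"
    unfolding K_def by linarith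
  then have K: "1 \<le> K" "1 < real K * (\<tau> - \<epsilon>)\<^sup>2"
    using \<epsilon> by (simp_all add: K_def field_simps)
  have "1/\<tau> \<le> 1/\<epsilon>"
    using \<epsilon> by (simp add: frac_le)
  then have "1/96 * (1/\<epsilon> + 1/\<tau>) \<le> 1 / (48 * \<epsilon>)"
    by simp
  then show "\<exists>N. \<forall>n\<ge>N. \<forall>m\<ge>1. \<forall>A. solves_ampfil n m \<epsilon> \<tau> A \<longrightarrow>
      real (num_queries A) \<ge> 1/96 * (1/\<epsilon> + 1/\<tau>)"
    using solves_ampfil_num_queries_ge[of \<epsilon> \<tau> K] \<epsilon> K
    by (intro exI[of _ "K + 2"] allI impI) (blast intro: order_trans)
qed simp

end
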